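(* Let $(Y,\mathfrak C,\gamma)$ be a standard non-atomic probability space, let $\mathbf B=(B_n)_{n=1}^\infty$ be a sequence of sets in $\mathfrak C$ with $\gamma(B_n)>0$, and let $\gamma^{\mathbf B}$ be the restricted infinite power of $\gamma$ with respect to $\mathbf B$ on $(X,\mathfrak B)=(Y,\mathfrak C)^{\otimes\mathbb N}$. Let $T$ be a $\gamma$-preserving Borel bijection of $Y$ and $\mathbf T=\bigotimes_{n=1}^\infty T$ the coordinatewise map on $X$. If $\sum_{n=1}^\infty \frac{\gamma(B_n\triangle TB_n)}{\gamma(B_n)}<\infty$, then $\mathbf T$ preserves $\gamma^{\mathbf B}$.
   Context: For $n\in\mathbb N$ put $\mathbf B^n=Y^n\times B_{n+1}\times B_{n+2}\times\cdots$, so $\mathbf B^1\subset\mathbf B^2\subset\cdots$. The restricted infinite power $\gamma^{\mathbf B}$ is the unique $\sigma$-finite measure on $(X,\mathfrak B)$, supported on $\bigcup_n\mathbf B^n$, whose restriction to each $\mathbf B^n$ equals $\frac{\gamma}{\gamma(B_1)}\otimes\cdots\otimes\frac{\gamma}{\gamma(B_n)}\otimes\frac{\gamma\restriction B_{n+1}}{\gamma(B_{n+1})}\otimes\frac{\gamma\restriction B_{n+2}}{\gamma(B_{n+2})}\otimes\cdots$ (these restrictions are compatible). *)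

theory Defs
  imports "HOL-Probability.Probability"
begin

definition nonatomic :: "'a measure \<Rightarrow> bool" where
  "nonatomic M \<longleftrightarrow> (\<forall>A\<in>sets M. 0 < measure M A \<longrightarrow>
      (\<exists>C\<in>sets M. C \<subseteq> A \<and> 0 < measure M C \<and> measure M C < measure M A))"

definition preserves :: "'a measure \<Rightarrow> ('a \<Rightarrow> 'a) \<Rightarrow> bool" where
  "preserves M f \<longleftrightarrow> f \<in> M \<rightarrow>\<^sub>M M \<and>
      (\<forall>A\<in>sets M. emeasure M (f -` A \<inter> space M) = emeasure M A)"

text \<open>Coordinates are indexed from 0. The set B^n: all coordinates k >= n lie in B k.\<close>
definition Bset :: "(nat \<Rightarrow> 'a set) \<Rightarrow> nat \<Rightarrow> (nat \<Rightarrow> 'a) set" where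
  "Bset B n = {x. \<forall>k\<ge>n. x k \<in> B k}"

definition norm_restr :: "'a measure \<Rightarrow> 'a set \<Rightarrow> 'a measure" where
  "norm_restr M C = density M (\<lambda>y. ennreal (1 / measure M C) * indicator C y)"

text \<open>The product measure
  gamma/gamma(B_0) x ... x gamma/gamma(B_{n-1}) x gamma|B_n/gamma(B_n) x ...,
  with the scalar factors pulled out of the product.\<close>
definition prod_n :: "'a measure \<Rightarrow> (nat \<Rightarrow> 'a set) \<Rightarrow> nat \<Rightarrow> (nat \<Rightarrow> 'a) measure" where
  "prod_n M B n = scale_measure (ennreal (\<Prod>k<n. 1 / measure M (B k)))
      (PiM UNIV (\<lambda>k. if k < n then M else norm_restr M (B k)))"

definition restricted_infinite_power ::
  "'a measure \<Rightarrow> (nat \<Rightarrow> 'a set) \<Rightarrow> (nat \<Rightarrow> 'a) measure \<Rightarrow> bool" where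
  "restricted_infinite_power M B \<nu> \<longleftrightarrow>
     sets \<nu> = sets (PiM UNIV (\<lambda>_. M)) \<and>
     sigma_finite_measure \<nu> \<and>
     emeasure \<nu> (space \<nu> - (\<Union>n. Bset B n)) = 0 \<and>
     (\<forall>n. \<forall>A\<in>sets \<nu>. emeasure \<nu> (A \<inter> Bset B n) = emeasure (prod_n M B n) A)"

end

theory Submission
  imports Defs
begin

text \<open>On \<open>B\<^sup>n\<close> the measure \<open>\<nu>\<close> is a multiple of an infinite product of probability
  measures (\<open>\<gamma>\<close> in the first \<open>n\<close> coordinates, \<open>\<gamma>\<restriction>B\<^sub>k/\<gamma>(B\<^sub>k)\<close> afterwards), and the
  coordinatewise map \<open>\<T>\<close> pushes a product forward to the product of the image factors.
  Since \<open>T\<close> preserves \<open>\<gamma>\<close>, the image of \<open>\<gamma>\<restriction>B\<^sub>k/\<gamma>(B\<^sub>k)\<close> agrees with it on subsets of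
  \<open>B\<^sub>k \<inter> T B\<^sub>k\<close>, so \<open>\<nu>\<close> and its image agree on the cylinders
  \<open>D\<^sub>n = {x. \<forall>k\<ge>n. x\<^sub>k \<in> B\<^sub>k \<inter> T B\<^sub>k}\<close>. The summability hypothesis and Borel--Cantelli in
  each product show that almost every \<open>x\<close>, and almost every \<open>\<T> x\<close>, lies in some \<open>D\<^sub>n\<close>;
  continuity from below along \<open>D\<^sub>n\<close> then gives \<open>\<nu>(\<T>\<^sup>-\<^sup>1 A) = \<nu>(A)\<close>.\<close>

lemma sets_norm_restr [simp]: "sets (norm_restr M C) = sets M"
  by (simp add: norm_restr_def)

lemma space_norm_restr [simp]: "space (norm_restr M C) = space M"
  by (simp add: norm_restr_def)

lemma emeasure_norm_restr:
  assumes "A \<in> sets M" "C \<in> sets M"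
  shows "emeasure (norm_restr M C) A = ennreal (1 / measure M C) * emeasure M (A \<inter> C)"
proof -
  have "emeasure (norm_restr M C) A = (\<integral>\<^sup>+ y. ennreal (1 / measure M C) * indicator (A \<inter> C) y \<partial>M)"
    unfolding norm_restr_def using assms
    by (subst emeasure_density) (auto intro!: nn_integral_cong simp: indicator_def)
  also have "\<dots> = ennreal (1 / measure M C) * emeasure M (A \<inter> C)"
    using assms by (intro nn_integral_cmult_indicator) auto
  finally show ?thesis .
qed

lemma prob_space_norm_restr:
  assumes "finite_measure M" "C \<in> sets M" "measure M C > 0"
  shows "prob_space (norm_restr M C)"
proof
  interpret finite_measure M by fact
  show "emeasure (norm_restr M C) (space (norm_restr M C)) = 1"
    using assms by (simp add: emeasure_norm_restr Int_absorb1 sets.sets_into_space emeasure_eq_measure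
       ennreal_mult''[symmetric])
qed

lemma emeasure_norm_restr_vimage:
  assumes T: "preserves M T" "inj T" and A: "A \<in> sets M" "A \<subseteq> C \<inter> T ` C" and C: "C \<in> sets M"
  shows "emeasure (norm_restr M C) (T -` A \<inter> space M) = emeasure (norm_restr M C) A"
proof -
  have TA: "T -` A \<inter> space M \<in> sets M"
    using T A unfolding preserves_def by (auto intro: measurable_sets)
  have "T -` A \<subseteq> C"
    using A \<open>inj T\<close> by (auto dest: injD)
  then have "T -` A \<inter> space M \<inter> C = T -` A \<inter> space M" and "A \<inter> C = A"
    using A by auto
  then show ?thesis
    using T A C TA by (simp add: emeasure_norm_restr preserves_def)
qed

lemma measurable_coordinatewise:
  fixes N :: "nat \<Rightarrow> 'a measure"
  assumes "\<And>i. f \<in> N i \<rightarrow>\<^sub>M M"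
  shows "(\<lambda>x i. f (x i)) \<in> PiM UNIV N \<rightarrow>\<^sub>M PiM UNIV (\<lambda>_. M)"
proof -
  have "(\<lambda>x. \<lambda>i\<in>UNIV. f (x i)) \<in> PiM UNIV N \<rightarrow>\<^sub>M PiM UNIV (\<lambda>_. M)"
    using assms by (intro measurable_restrict measurable_compose[OF measurable_component_singleton]) auto
  then show ?thesis
    by (simp add: restrict_UNIV)
qed

lemma distr_PiM_coordinatewise:
  fixes N :: "nat \<Rightarrow> 'a measure"
  assumes N: "\<And>i. prob_space (N i)" "\<And>i. sets (N i) = sets M" and f: "f \<in> M \<rightarrow>\<^sub>M M"
  shows "distr (PiM UNIV N) (PiM UNIV (\<lambda>_. M)) (\<lambda>x i. f (x i)) = PiM UNIV (\<lambda>i. distr (N i) M f)"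
proof -
  have fN: "f \<in> N i \<rightarrow>\<^sub>M M" for i
    using f by (simp add: measurable_cong_sets[OF N(2) refl])
  note f_PiM = measurable_coordinatewise[OF fN]
  interpret distr_factors: product_prob_space "\<lambda>i. distr (N i) M f" UNIV
    using N fN by (intro product_prob_spaceI prob_space.prob_space_distr)
  have sets_eq: "sets (PiM UNIV (\<lambda>_. M)) = sets (PiM UNIV (\<lambda>i. distr (N i) M f))"
    by (auto intro!: sets_PiM_cong)
  show ?thesis
  proof (rule distr_factors.PiM_eq)
    show "sets (distr (PiM UNIV N) (PiM UNIV (\<lambda>_. M)) (\<lambda>x i. f (x i))) = sets (PiM UNIV (\<lambda>i. distr (N i) M f))"
      by (simp add: sets_eq)
    fix J and A :: "nat \<Rightarrow> 'a set"
    assume J: "finite J" and A: "\<And>j. j \<in> J \<Longrightarrow> A j \<in> sets (distr (N j) M f)"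
    have "(\<lambda>x i. f (x i)) -` prod_emb UNIV (\<lambda>i. distr (N i) M f) J (Pi\<^sub>E J A) \<inter> space (PiM UNIV N)
       = prod_emb UNIV N J (Pi\<^sub>E J (\<lambda>j. f -` A j \<inter> space (N j)))"
      using fN[THEN measurable_space] by (auto simp: prod_emb_def space_PiM PiE_iff)
    then have "emeasure (distr (PiM UNIV N) (PiM UNIV (\<lambda>_. M)) (\<lambda>x i. f (x i)))
        (prod_emb UNIV (\<lambda>i. distr (N i) M f) J (Pi\<^sub>E J A))
      = emeasure (PiM UNIV N) (prod_emb UNIV N J (Pi\<^sub>E J (\<lambda>j. f -` A j \<inter> space (N j))))"
      using f_PiM J A by (subst emeasure_distr) (auto simp: sets_eq intro!: sets_PiM_I)
    also have "\<dots> = (\<Prod>j\<in>J. emeasure (N j) (f -` A j \<inter> space (N j)))"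
      using J A fN by (intro emeasure_PiM_emb N) auto
    also have "\<dots> = (\<Prod>j\<in>J. emeasure (distr (N j) M f) (A j))"
      using A fN by (intro prod.cong refl emeasure_distr[symmetric]) auto
    finally show "emeasure (distr (PiM UNIV N) (PiM UNIV (\<lambda>_. M)) (\<lambda>x i. f (x i)))
        (prod_emb UNIV (\<lambda>i. distr (N i) M f) J (Pi\<^sub>E J A)) = (\<Prod>j\<in>J. emeasure (distr (N j) M f) (A j))" .
  qed
qed

lemma AE_PiM_eventually_in:
  fixes F :: "nat \<Rightarrow> 'a measure"
  assumes F: "\<And>i. prob_space (F i)" and G: "\<And>i. G i \<in> sets (F i)"
    and summable: "summable (\<lambda>i. measure (F i) (space (F i) - G i))"
  shows "AE x in PiM UNIV F. \<forall>\<^sub>F i in sequentially. x i \<in> G i"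
proof -
  interpret product_prob_space F UNIV
    by (intro product_prob_spaceI F)
  define A where "A i = {x \<in> space (PiM UNIV F). x i \<in> space (F i) - G i}" for i
  have A_sets: "A i \<in> sets (PiM UNIV F)" for i
    unfolding A_def using G by auto
  have "emeasure (PiM UNIV F) (A i) = emeasure (F i) (space (F i) - G i)" for i
    unfolding A_def using G by (intro emeasure_PiM_Collect_single) auto
  then have "AE x in PiM UNIV F. \<forall>\<^sub>F i in sequentially. x \<in> space (PiM UNIV F) - A i"
    using A_sets summable by (intro borel_cantelli_AE1) (auto simp: measure_def less_top[symmetric])
  then show ?thesis
    by eventually_elim (auto simp: A_def space_PiM elim!: eventually_mono)
qed

lemma emeasure_PiM_Collect_infinite:
  fixes F :: "nat \<Rightarrow> 'a measure"
  assumes F: "\<And>i. prob_space (F i)" and H: "\<And>i. H i \<in> sets (F i)"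
  shows "emeasure (PiM UNIV F) {x\<in>space (PiM UNIV F). \<forall>i. x i \<in> H i}
       = (INF n. \<Prod>i<n. emeasure (F i) (H i))"
proof -
  interpret product_prob_space F UNIV
    by (intro product_prob_spaceI F)
  define Z where "Z n = {x\<in>space (PiM UNIV F). \<forall>i\<in>{..<n}. x i \<in> H i}" for n
  have "{x\<in>space (PiM UNIV F). \<forall>i. x i \<in> H i} = (\<Inter>n. Z n)"
    unfolding Z_def by auto
  also have "emeasure (PiM UNIV F) \<dots> = (INF n. emeasure (PiM UNIV F) (Z n))"
    unfolding Z_def using H by (intro INF_emeasure_decseq[symmetric]) (auto simp: decseq_def)
  also have "\<dots> = (INF n. \<Prod>i<n. emeasure (F i) (H i))"
    unfolding Z_def using H by (simp add: emeasure_PiM_Collect)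
  finally show ?thesis .
qed

lemma emeasure_PiM_Int_Pi_cong:
  fixes F G :: "nat \<Rightarrow> 'a measure"
  assumes F: "\<And>i. prob_space (F i)" and G: "\<And>i. prob_space (G i)"
    and sets_eq: "\<And>i. sets (G i) = sets (F i)" and C: "\<And>i. C i \<in> sets (F i)"
    and eq: "\<And>i A. A \<in> sets (F i) \<Longrightarrow> A \<subseteq> C i \<Longrightarrow> emeasure (F i) A = emeasure (G i) A"
    and E: "E \<in> sets (PiM UNIV F)"
  shows "emeasure (PiM UNIV F) (E \<inter> Pi UNIV C) = emeasure (PiM UNIV G) (E \<inter> Pi UNIV C)"
proof -
  interpret PF: prob_space "PiM UNIV F" by (intro prob_space_PiM F)
  have sets_PiM_eq: "sets (PiM UNIV G) = sets (PiM UNIV F)"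
    using sets_eq by (intro sets_PiM_cong) auto
  have space_eq: "space (PiM UNIV G) = space (PiM UNIV F)"
    using sets_eq_imp_space_eq[OF sets_PiM_eq] .
  define D where "D = {x \<in> space (PiM UNIV F). \<forall>i. x i \<in> C i}"
  have D: "D \<in> sets (PiM UNIV F)"
    unfolding D_def using C by measurable
  have "density (PiM UNIV F) (indicator D) = density (PiM UNIV G) (indicator D)"
  proof (rule measure_eqI_PiM_infinite[where M=F and I=UNIV])
    show "finite_measure (density (PiM UNIV F) (indicator D))"
      using D by (intro finite_measureI) (simp add: emeasure_restricted)
    fix J and A :: "nat \<Rightarrow> 'a set"
    assume "finite J" "J \<subseteq> UNIV" and A: "\<And>i. i \<in> J \<Longrightarrow> A i \<in> sets (F i)"
    define H where "H i = (if i \<in> J then A i \<inter> C i else C i)" for i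
    have H: "H i \<in> sets (F i)" "H i \<subseteq> C i" for i
      using A C by (auto simp: H_def)
    have emb: "prod_emb UNIV F J (Pi\<^sub>E J A) \<in> sets (PiM UNIV F)"
      using \<open>finite J\<close> A by (intro sets_PiM_I) auto
    have D_emb: "D \<inter> prod_emb UNIV F J (Pi\<^sub>E J A) = {x\<in>space (PiM UNIV F). \<forall>i. x i \<in> H i}"
      by (auto simp: D_def H_def prod_emb_def space_PiM PiE_iff)
    have "emeasure (F i) (H i) = emeasure (G i) (H i)" for i
      using H by (rule eq)
    then have "emeasure (PiM UNIV F) {x\<in>space (PiM UNIV F). \<forall>i. x i \<in> H i}
        = emeasure (PiM UNIV G) {x\<in>space (PiM UNIV G). \<forall>i. x i \<in> H i}"
      using F G H sets_eq by (simp add: emeasure_PiM_Collect_infinite)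
    then show "emeasure (density (PiM UNIV F) (indicator D)) (prod_emb UNIV F J (Pi\<^sub>E J A))
        = emeasure (density (PiM UNIV G) (indicator D)) (prod_emb UNIV F J (Pi\<^sub>E J A))"
      using D emb by (simp add: emeasure_restricted sets_PiM_eq space_eq D_emb)
  qed (simp_all add: sets_PiM_eq)
  then have "emeasure (density (PiM UNIV F) (indicator D)) E = emeasure (density (PiM UNIV G) (indicator D)) E"
    by simp
  moreover have "E \<inter> Pi UNIV C = D \<inter> E"
    using E[THEN sets.sets_into_space] by (auto simp: D_def)
  ultimately show ?thesis
    using D E by (simp add: emeasure_restricted sets_PiM_eq)
qed

lemma preservesI_exhaustion:
  assumes S: "S \<in> N \<rightarrow>\<^sub>M N" and D: "incseq D" "\<And>n. D n \<in> sets N"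
    and AE_D: "AE x in N. \<exists>n. x \<in> D n" and AE_SD: "AE x in N. \<exists>n. S x \<in> D n"
    and preserves_D: "\<And>A n. A \<in> sets N \<Longrightarrow> emeasure N (S -` (A \<inter> D n) \<inter> space N) = emeasure N (A \<inter> D n)"
  shows "preserves N S"
  unfolding preserves_def
proof (intro conjI ballI S)
  fix A assume A: "A \<in> sets N"
  have AD: "A \<inter> D n \<in> sets N" for n
    using A D by blast
  define V where "V n = S -` (A \<inter> D n) \<inter> space N" for n
  have V: "V n \<in> sets N" for n
    unfolding V_def using S AD by (rule measurable_sets)
  have "incseq V"
    using D(1) unfolding incseq_def V_def by blast
  have "emeasure N (S -` A \<inter> space N) = emeasure N (\<Union>n. V n)"
  proof (rule emeasure_eq_AE)
    show "AE x in N. x \<in> S -` A \<inter> space N \<longleftrightarrow> x \<in> (\<Union>n. V n)"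
      using AE_SD by eventually_elim (auto simp: V_def)
  qed (use measurable_sets[OF S A] V in auto)
  also have "\<dots> = (SUP n. emeasure N (V n))"
    using V \<open>incseq V\<close> by (intro SUP_emeasure_incseq[symmetric]) auto
  also have "\<dots> = (SUP n. emeasure N (A \<inter> D n))"
    unfolding V_def using A by (simp only: preserves_D)
  also have "\<dots> = emeasure N (\<Union>n. A \<inter> D n)"
    using AD D(1) by (intro SUP_emeasure_incseq) (auto simp: incseq_def)
  also have "\<dots> = emeasure N A"
    using AE_D A D(2) by (intro emeasure_eq_AE) auto
  finally show "emeasure N (S -` A \<inter> space N) = emeasure N A" .
qed

lemma incseq_Bset: "incseq (Bset G)"
  by (auto simp: incseq_def Bset_def)

lemma Bset_eq_Pi: "Bset G n = Pi UNIV (\<lambda>k. if n \<le> k then G k else UNIV)"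
  unfolding Bset_def Pi_def by (auto split: if_splits)

lemma ex_Bset_iff_eventually: "(\<exists>n. x \<in> Bset G n) \<longleftrightarrow> (\<forall>\<^sub>F k in sequentially. x k \<in> G k)"
  by (simp add: Bset_def eventually_sequentially)

locale restricted_infinite_power_space = prob_space M
  for M :: "'a measure" +
  fixes B :: "nat \<Rightarrow> 'a set" and \<nu> :: "(nat \<Rightarrow> 'a) measure"
  assumes space_eq_UNIV: "space M = UNIV"
    and B_sets: "B n \<in> sets M"
    and B_pos: "0 < measure M (B n)"
    and restricted_infinite_power: "restricted_infinite_power M B \<nu>"
begin

definition factor :: "nat \<Rightarrow> nat \<Rightarrow> 'a measure" where
  "factor n k = (if k < n then M else norm_restr M (B k))"

lemma sets_factor [simp]: "sets (factor n k) = sets M"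
  by (simp add: factor_def)

lemma measurable_factor_iff [simp]: "f \<in> factor n k \<rightarrow>\<^sub>M N \<longleftrightarrow> f \<in> M \<rightarrow>\<^sub>M N"
  by (simp add: measurable_cong_sets[OF sets_factor refl])

lemma prob_space_factor: "prob_space (factor n k)"
  using B_sets B_pos by (auto simp: factor_def intro: prob_space_axioms prob_space_norm_restr finite_measure)

lemma sets_\<nu>: "sets \<nu> = sets (PiM UNIV (\<lambda>_. M))"
  using restricted_infinite_power by (simp add: restricted_infinite_power_def)

lemma space_\<nu> [simp]: "space \<nu> = UNIV"
  using sets_eq_imp_space_eq[OF sets_\<nu>] by (simp add: space_PiM space_eq_UNIV)

lemma sets_PiM_factor: "sets (PiM UNIV (factor n)) = sets \<nu>"
  unfolding sets_\<nu> by (intro sets_PiM_cong) auto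

lemma space_PiM_factor [simp]: "space (PiM UNIV (factor n)) = UNIV"
  using sets_eq_imp_space_eq[OF sets_PiM_factor] by simp

lemma emeasure_Int_Bset:
  assumes "A \<in> sets \<nu>"
  shows "emeasure \<nu> (A \<inter> Bset B n) = ennreal (\<Prod>k<n. 1 / measure M (B k)) * emeasure (PiM UNIV (factor n)) A"
  using restricted_infinite_power assms
  by (simp add: restricted_infinite_power_def prod_n_def factor_def[abs_def])

lemma sets_Bset:
  assumes "\<And>k. G k \<in> sets M"
  shows "Bset G n \<in> sets \<nu>"
proof -
  have "Bset G n = {x \<in> space (PiM UNIV (\<lambda>_. M)). \<forall>k. n \<le> k \<longrightarrow> x k \<in> G k}"
    by (auto simp: Bset_def space_PiM space_eq_UNIV)
  also have "\<dots> \<in> sets (PiM UNIV (\<lambda>_. M))"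
    using assms by measurable
  finally show ?thesis
    by (simp add: sets_\<nu>)
qed

lemma sets_UN_Bset:
  assumes "\<And>k. G k \<in> sets M"
  shows "(\<Union>n. Bset G n) \<in> sets \<nu>"
  using assms by (intro sets.countable_nat_UN) (auto intro: sets_Bset)

lemma AE_ex_Bset_B: "AE x in \<nu>. \<exists>n. x \<in> Bset B n"
proof (rule AE_I')
  show "space \<nu> - (\<Union>n. Bset B n) \<in> null_sets \<nu>"
    using restricted_infinite_power sets.compl_sets[OF sets_UN_Bset[of B]] B_sets
    by (auto simp: restricted_infinite_power_def null_sets_def)
qed auto

lemma AE_ex_Bset:
  assumes G: "\<And>k. G k \<in> sets M"
    and summable: "summable (\<lambda>k. measure M (B k - G k) / measure M (B k))"
  shows "AE x in \<nu>. \<exists>n. x \<in> Bset G n"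
proof -
  have "AE x in \<nu>. x \<in> Bset B n \<longrightarrow> (\<exists>m. x \<in> Bset G m)" for n
  proof -
    define W where "W = space \<nu> - (\<Union>m. Bset G m)"
    have W: "W \<in> sets \<nu>"
      unfolding W_def using G by (intro sets.compl_sets sets_UN_Bset)
    have "measure (factor n k) (space (factor n k) - G k) = measure M (B k - G k) / measure M (B k)"
      if "n \<le> k" for k
    proof -
      have "space (factor n k) - G k = UNIV - G k" and "(UNIV - G k) \<inter> B k = B k - G k"
        using sets_eq_imp_space_eq[OF sets_factor] by (auto simp: space_eq_UNIV)
      moreover have "UNIV - G k \<in> sets M"
        using sets.compl_sets[OF G] by (simp add: space_eq_UNIV)
      ultimately have "emeasure (factor n k) (space (factor n k) - G k)
          = ennreal (1 / measure M (B k)) * ennreal (measure M (B k - G k))"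
        using that B_sets G by (simp add: factor_def emeasure_norm_restr emeasure_eq_measure)
      then show ?thesis
        by (simp add: measure_def ennreal_mult''[symmetric])
    qed
    then have "summable (\<lambda>k. measure (factor n k) (space (factor n k) - G k))"
      using summable by (subst summable_cong[where g="\<lambda>k. measure M (B k - G k) / measure M (B k)"])
        (auto simp: eventually_sequentially)
    then have "AE x in PiM UNIV (factor n). \<forall>\<^sub>F k in sequentially. x k \<in> G k"
      using G by (intro AE_PiM_eventually_in prob_space_factor) auto
    then have "emeasure (PiM UNIV (factor n)) W = 0"
      using W by (subst AE_iff_measurable[symmetric, where P="\<lambda>x. x \<notin> W"])
        (auto simp: sets_PiM_factor W_def ex_Bset_iff_eventually[symmetric])
    then have "W \<inter> Bset B n \<in> null_sets \<nu>"
      using W sets_Bset[of B] B_sets by (simp add: emeasure_Int_Bset null_sets_def)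
    then show ?thesis
      by (rule AE_I') (auto simp: W_def)
  qed
  then have "AE x in \<nu>. \<forall>n. x \<in> Bset B n \<longrightarrow> (\<exists>m. x \<in> Bset G m)"
    by (intro AE_all_countable[THEN iffD2] allI)
  with AE_ex_Bset_B show ?thesis
    by eventually_elim blast
qed

lemma emeasure_distr_factor:
  assumes T: "preserves M T" "inj T"
    and X: "X \<in> sets M" "n \<le> k \<Longrightarrow> X \<subseteq> B k \<inter> T ` B k"
  shows "emeasure (distr (factor n k) M T) X = emeasure (factor n k) X"
proof -
  have "T \<in> factor n k \<rightarrow>\<^sub>M M"
    using T by (simp add: preserves_def)
  then have "emeasure (distr (factor n k) M T) X = emeasure (factor n k) (T -` X \<inter> space M)"
    using X sets_eq_imp_space_eq[OF sets_factor] by (simp add: emeasure_distr)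
  also have "\<dots> = emeasure (factor n k) X"
  proof (cases "k < n")
    case True
    then show ?thesis
      using T X by (simp add: factor_def preserves_def)
  next
    case False
    then show ?thesis
      using T X B_sets by (simp add: factor_def emeasure_norm_restr_vimage)
  qed
  finally show ?thesis .
qed

lemma emeasure_coordinatewise_vimage_Int_Bset:
  assumes T: "preserves M T" "inj T" "\<And>k. T ` B k \<in> sets M" and A: "A \<in> sets \<nu>"
  shows "emeasure \<nu> ((\<lambda>x k. T (x k)) -` (A \<inter> Bset (\<lambda>k. B k \<inter> T ` B k) n))
       = emeasure \<nu> (A \<inter> Bset (\<lambda>k. B k \<inter> T ` B k) n)"
proof -
  define S where "S x k = T (x k)" for x :: "nat \<Rightarrow> 'a" and k
  define C where "C k = (if n \<le> k then B k \<inter> T ` B k else UNIV)" for k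
  define c where "c = ennreal (\<Prod>k<n. 1 / measure M (B k))"
  have T_meas: "T \<in> M \<rightarrow>\<^sub>M M"
    using T by (simp add: preserves_def)
  have C: "C k \<in> sets M" for k
    using T B_sets by (simp add: C_def space_eq_UNIV[symmetric])
  have D_eq: "Bset (\<lambda>k. B k \<inter> T ` B k) n = Pi UNIV C"
    unfolding C_def by (rule Bset_eq_Pi)
  have AD: "A \<inter> Pi UNIV C \<in> sets \<nu>"
    using A sets_Bset[of "\<lambda>k. B k \<inter> T ` B k"] T B_sets by (auto simp: D_eq[symmetric])
  have S_meas: "S \<in> PiM UNIV (factor n) \<rightarrow>\<^sub>M PiM UNIV (\<lambda>_. M)"
    unfolding S_def[abs_def] using T_meas
    by (intro measurable_coordinatewise) simp
  have SAD: "S -` (A \<inter> Pi UNIV C) \<in> sets \<nu>"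
    using measurable_sets[OF S_meas, of "A \<inter> Pi UNIV C"] AD by (simp add: sets_\<nu> sets_PiM_factor)
  have "S -` (A \<inter> Pi UNIV C) \<subseteq> Bset B n"
    using \<open>inj T\<close> by (auto simp: S_def[abs_def] D_eq[symmetric] Bset_def inj_image_mem_iff)
  then have "emeasure \<nu> (S -` (A \<inter> Pi UNIV C)) = c * emeasure (PiM UNIV (factor n)) (S -` (A \<inter> Pi UNIV C))"
    using emeasure_Int_Bset[OF SAD, of n] by (simp add: c_def Int_absorb2)
  also have "\<dots> = c * emeasure (distr (PiM UNIV (factor n)) (PiM UNIV (\<lambda>_. M)) S) (A \<inter> Pi UNIV C)"
    using S_meas AD by (simp add: emeasure_distr sets_\<nu>)
  also have "\<dots> = c * emeasure (PiM UNIV (\<lambda>k. distr (factor n k) M T)) (A \<inter> Pi UNIV C)"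
    unfolding S_def[abs_def] using prob_space_factor T_meas
    by (simp add: distr_PiM_coordinatewise)
  also have "\<dots> = c * emeasure (PiM UNIV (factor n)) (A \<inter> Pi UNIV C)"
  proof -
    have "sets (PiM UNIV (\<lambda>k. distr (factor n k) M T)) = sets \<nu>"
      unfolding sets_\<nu> by (intro sets_PiM_cong) auto
    then show ?thesis
      using prob_space_factor T_meas A C T
      by (subst emeasure_PiM_Int_Pi_cong[where G="factor n"])
        (auto intro: prob_space.prob_space_distr emeasure_distr_factor simp: C_def split: if_splits)
  qed
  also have "\<dots> = emeasure \<nu> (A \<inter> Pi UNIV C)"
  proof -
    have "A \<inter> Pi UNIV C \<inter> Bset B n = A \<inter> Pi UNIV C"
      by (auto simp: D_eq[symmetric] Bset_def)
    then show ?thesis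
      using emeasure_Int_Bset[OF AD, of n] by (simp add: c_def)
  qed
  finally show ?thesis
    by (simp add: S_def[abs_def] D_eq)
qed

theorem preserves_coordinatewise:
  assumes T: "preserves M T" "inj T" "\<And>k. T ` B k \<in> sets M"
    and summable: "summable (\<lambda>k. measure M ((B k - T ` B k) \<union> (T ` B k - B k)) / measure M (B k))"
  shows "preserves \<nu> (\<lambda>x k. T (x k))"
proof (rule preservesI_exhaustion)
  have T_meas: "T \<in> M \<rightarrow>\<^sub>M M"
    using T by (simp add: preserves_def)
  have summable_Diff: "summable (\<lambda>k. measure M (B k - G k) / measure M (B k))"
    if "\<And>k. measure M (B k - G k) \<le> measure M ((B k - T ` B k) \<union> (T ` B k - B k))" for G
    using summable by (rule summable_comparison_test') (use that B_pos in \<open>auto intro: divide_right_mono\<close>)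
  have symdiff_sets: "(B k - T ` B k) \<union> (T ` B k - B k) \<in> sets M" for k
    using B_sets T by auto
  show "(\<lambda>x k. T (x k)) \<in> \<nu> \<rightarrow>\<^sub>M \<nu>"
    using measurable_coordinatewise[where N="\<lambda>_. M", OF T_meas]
    by (simp add: measurable_cong_sets[OF sets_\<nu> sets_\<nu>])
  show "incseq (Bset (\<lambda>k. B k \<inter> T ` B k))"
    by (rule incseq_Bset)
  show "Bset (\<lambda>k. B k \<inter> T ` B k) n \<in> sets \<nu>" for n
    using B_sets T by (intro sets_Bset) auto
  have "measure M (B k - B k \<inter> T ` B k) \<le> measure M ((B k - T ` B k) \<union> (T ` B k - B k))" for k
    using symdiff_sets by (intro finite_measure_mono) auto
  then show "AE x in \<nu>. \<exists>n. x \<in> Bset (\<lambda>k. B k \<inter> T ` B k) n"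
    using B_sets T by (intro AE_ex_Bset summable_Diff) auto
  have "measure M (B k - B k \<inter> T -` B k) \<le> measure M ((B k - T ` B k) \<union> (T ` B k - B k))" for k
  proof -
    have "B k - B k \<inter> T -` B k = T -` (T ` B k - B k)"
      using \<open>inj T\<close> by (auto simp: inj_image_mem_iff dest: injD)
    then have "measure M (B k - B k \<inter> T -` B k) = measure M (T ` B k - B k)"
      using T B_sets by (simp add: preserves_def measure_def space_eq_UNIV)
    also have "\<dots> \<le> measure M ((B k - T ` B k) \<union> (T ` B k - B k))"
      using symdiff_sets by (intro finite_measure_mono) auto
    finally show ?thesis .
  qed
  moreover have "B k \<inter> T -` B k \<in> sets M" for k
    using B_sets measurable_sets[OF T_meas] by (auto simp: space_eq_UNIV)
  ultimately have "AE x in \<nu>. \<exists>n. x \<in> Bset (\<lambda>k. B k \<inter> T -` B k) n"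
    by (intro AE_ex_Bset summable_Diff)
  then show "AE x in \<nu>. \<exists>n. (\<lambda>k. T (x k)) \<in> Bset (\<lambda>k. B k \<inter> T ` B k) n"
    by eventually_elim (auto simp: Bset_def)
  show "emeasure \<nu> ((\<lambda>x k. T (x k)) -` (A \<inter> Bset (\<lambda>k. B k \<inter> T ` B k) n) \<inter> space \<nu>)
      = emeasure \<nu> (A \<inter> Bset (\<lambda>k. B k \<inter> T ` B k) n)" if "A \<in> sets \<nu>" for A n
    using emeasure_coordinatewise_vimage_Int_Bset[OF T that] by simp
qed

end

theorem proposition1p6:
  fixes M :: "'a::polish_space measure"
    and B :: "nat \<Rightarrow> 'a set"
    and T :: "'a \<Rightarrow> 'a"
    and \<nu> :: "(nat \<Rightarrow> 'a) measure"
  assumes standard: "sets M = sets (borel :: 'a measure)"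
    and prob: "prob_space M"
    and nonat: "nonatomic M"
    and B_meas: "\<And>n. B n \<in> sets M"
    and B_pos: "\<And>n. measure M (B n) > 0"
    and rip: "restricted_infinite_power M B \<nu>"
    and T_bij: "bij T"
    and T_meas: "T \<in> M \<rightarrow>\<^sub>M M"
    and T_inv_meas: "inv T \<in> M \<rightarrow>\<^sub>M M"
    and T_pres: "preserves M T"
    and summ: "summable (\<lambda>n. measure M ((B n - T ` B n) \<union> (T ` B n - B n)) / measure M (B n))"
  shows "preserves \<nu> (\<lambda>x. \<lambda>k. T (x k))"
proof -
  have space_M: "space M = UNIV"
    using sets_eq_imp_space_eq[OF standard] by simp
  interpret restricted_infinite_power_space M B \<nu>
    using prob space_M B_meas B_pos rip by (simp add: restricted_infinite_power_space_def
        restricted_infinite_power_space_axioms_def)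
  have "T ` B k = inv T -` B k" for k
    using bij_vimage_eq_inv_image[OF bij_imp_bij_inv[OF T_bij]] T_bij by (simp add: inv_inv_eq)
  then have "T ` B k \<in> sets M" for k
    using measurable_sets[OF T_inv_meas B_meas] by (simp add: space_M)
  then show ?thesis
    using T_pres T_bij summ by (intro preserves_coordinatewise) (auto simp: bij_is_inj)
qed

end
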